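(* Let $M \neq \{0\}$ be a semiideal of $\mathbb{N}_0$ and let $d$ be the period of $M$. If $a, b \in M$, $a \neq 0$, and $a + d = b$, then $d$ divides $a$.
   Context: $\mathbb{N}_0$ is the semiring of natural numbers including $0$. A semiideal of $\mathbb{N}_0$ is a nonempty subset closed under addition and multiplication by elements of $\mathbb{N}_0$. For a semiideal $M\neq 0$, an element $e \in \mathbb{N}=\mathbb{N}_0\setminus\{0\}$ is a difference of $M$ if there are $x,y\in M$, $x\neq 0$, with $x+e=y$; the period of $M$ is the minimal difference. *)

theory Defs
  imports Main
begin

definition semiideal :: "nat set \<Rightarrow> bool" where
  "semiideal M \<longleftrightarrow> M \<noteq> {} \<and> (\<forall>x\<in>M. \<forall>y\<in>M. x + y \<in> M) \<and> (\<forall>r. \<forall>x\<in>M. r * x \<in> M)"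

definition is_difference :: "nat set \<Rightarrow> nat \<Rightarrow> bool" where
  "is_difference M e \<longleftrightarrow> e \<noteq> 0 \<and> (\<exists>x\<in>M. \<exists>y\<in>M. x \<noteq> 0 \<and> x + e = y)"

definition period :: "nat set \<Rightarrow> nat" where
  "period M = (LEAST e. is_difference M e)"

end

theory Submission
  imports Defs
begin

text \<open>Every nonzero \<open>a \<in> M\<close> is a difference (as \<open>a + a = 2a\<close>), so \<open>d \<le> a\<close>. Write
  \<open>a = q d + r\<close> with \<open>q \<ge> 1\<close> and \<open>r < d\<close>; multiplying \<open>a + d = b\<close> by \<open>q\<close> gives
  \<open>q b + r = (q + 1) a\<close>, so a nonzero \<open>r\<close> would be a difference smaller than the period.\<close>

lemma semiideal_mult_closed:
  assumes "semiideal M" and "x \<in> M"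
  shows "r * x \<in> M"
  using assms unfolding semiideal_def by blast

lemma is_difference_self:
  assumes "semiideal M" and "a \<in> M" and "a \<noteq> 0"
  shows "is_difference M a"
proof -
  have "2 * a \<in> M" using semiideal_mult_closed[OF assms(1,2)] .
  then show ?thesis
    unfolding is_difference_def using assms(2,3) by (intro conjI bexI[of _ a] bexI[of _ "2 * a"]) auto
qed

lemma is_difference_period:
  assumes "is_difference M e"
  shows "is_difference M (period M)"
  unfolding period_def using assms by (rule LeastI)

lemma period_le:
  assumes "is_difference M e"
  shows "period M \<le> e"
  unfolding period_def using assms by (rule Least_le)

lemma period_pos:
  assumes "is_difference M e"
  shows "0 < period M"
  using is_difference_period[OF assms] unfolding is_difference_def by blast

lemma is_difference_mod:
  assumes "semiideal M" and "a \<in> M" and "a + d \<in> M" and "0 < d" and "d \<le> a"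
    and "a mod d \<noteq> 0"
  shows "is_difference M (a mod d)"
proof -
  define q where "q = a div d"
  have "q \<noteq> 0" unfolding q_def using assms(4,5) by (simp add: div_greater_zero_iff)
  have "q * (a + d) + a mod d = q * a + a"
    unfolding q_def by (metis add.assoc add_mult_distrib2 div_mult_mod_eq mult.commute)
  then have "q * (a + d) + a mod d = (q + 1) * a" by simp
  moreover have "q * (a + d) \<in> M" "(q + 1) * a \<in> M"
    using semiideal_mult_closed assms(1-3) by blast+
  moreover have "q * (a + d) \<noteq> 0" using \<open>q \<noteq> 0\<close> assms(4) by simp
  ultimately show ?thesis
    unfolding is_difference_def using assms(6) by blast
qed

theorem lemma4p3:
  fixes M :: "nat set" and a b d :: nat
  assumes "semiideal M" and "M \<noteq> {0}"
    and "d = period M"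
    and "a \<in> M" and "b \<in> M" and "a \<noteq> 0" and "a + d = b"
  shows "d dvd a"
proof (rule ccontr)
  assume "\<not> d dvd a"
  then have r: "a mod d \<noteq> 0" by (simp add: dvd_eq_mod_eq_0)
  have diff_a: "is_difference M a" using is_difference_self assms(1,4,6) .
  have "0 < d" using period_pos[OF diff_a] assms(3) by simp
  have "d \<le> a" using period_le[OF diff_a] assms(3) by simp
  have "is_difference M (a mod d)"
    using is_difference_mod[OF assms(1,4)] assms(5,7) \<open>0 < d\<close> \<open>d \<le> a\<close> r by simp
  then have "d \<le> a mod d" using period_le assms(3) by simp
  with \<open>0 < d\<close> show False using mod_less_divisor[of d a] by linarith
qed

end
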